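(* Let $\mathcal I$ be a canonical instance with groups $G_1,\dots,G_k$ and group weights $w_1>\cdots>w_k$, group sizes $n_1,\dots,n_k$, $W_i=n_iw_i$, and define $L_1=0$ and $L_r=\frac{\sum_{j<r}W_j}{w_r}$ for $r=2,\dots,k$. Then for every agent $a_{i,j}$, every $r\in[k]$ and every item $e_h$ with $h>L_r$, we have $v_{i,j}(e_h)\le w_r$.
   Context: Chore-allocation instance: agents, a finite set $\mathcal M=\{e_1,\dots,e_m\}$ of indivisible items, positive weights, additive cost functions $v:2^{\mathcal M}\to\mathbb R_{\ge0}$. The weighted maximin share of agent $a$ with weight $w_a$ and cost $v_a$ is $\mathsf{WMMS}_a=w_a\min_{\text{allocations }(B_b)_b}\max_{b}\frac{v_a(B_b)}{w_b}$, where allocations are ordered partitions of $\mathcal M$ into one (possibly empty) bundle per agent. An instance is canonical if: (i) $\max$ weight is $w_1$, weights sum to $1$, and every weight equals $w_1/2^p$ for some nonnegative integer $p$; (ii) every agent's total cost $v(\mathcal M)=1$, and every single-item cost is either $0$ or $w_1/2^p$ for some nonnegative integer $p$; (iii) every agent has $v(e_1)\ge\cdots\ge v(e_m)$; (iv) every agent's $\mathsf{WMMS}$ equals her weight. Agents are partitioned into groups $G_1,\dots,G_k$ by weight, all agents of $G_i$ having weight $w_i$, with $w_1>w_2>\cdots>w_k$; $G_i=\{a_{i,1},\dots,a_{i,n_i}\}$ and $v_{i,j}$ is the cost function of $a_{i,j}$. *)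

theory Defs
  imports Complex_Main "HOL-Library.FuncSet"
begin

text \<open>Agents are a finite set N of type 'a; items are e_1,...,e_m, represented by {1..m}.
  w a is the weight of agent a, v a e the cost of item e for agent a; bundle_of costs are additive.\<close>

definition cost :: "('a \<Rightarrow> nat \<Rightarrow> real) \<Rightarrow> 'a \<Rightarrow> nat set \<Rightarrow> real" where
  "cost v a S = (\<Sum>e\<in>S. v a e)"

definition allocations :: "'a set \<Rightarrow> nat \<Rightarrow> (nat \<Rightarrow> 'a) set" where
  "allocations N m = PiE {1..m} (\<lambda>_. N)"

definition bundle_of :: "nat \<Rightarrow> (nat \<Rightarrow> 'a) \<Rightarrow> 'a \<Rightarrow> nat set" where
  "bundle_of m f b = {e \<in> {1..m}. f e = b}"

definition WMMS :: "'a set \<Rightarrow> nat \<Rightarrow> ('a \<Rightarrow> real) \<Rightarrow> ('a \<Rightarrow> nat \<Rightarrow> real) \<Rightarrow> 'a \<Rightarrow> real" where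
  "WMMS N m w v a = w a * Min ((\<lambda>f. Max ((\<lambda>b. cost v a (bundle_of m f b) / w b) ` N)) ` allocations N m)"

definition canonical :: "'a set \<Rightarrow> nat \<Rightarrow> ('a \<Rightarrow> real) \<Rightarrow> ('a \<Rightarrow> nat \<Rightarrow> real) \<Rightarrow> bool" where
  "canonical N m w v \<longleftrightarrow>
     finite N \<and> N \<noteq> {} \<and> (\<forall>a\<in>N. w a > 0) \<and>
     (\<Sum>a\<in>N. w a) = 1 \<and>
     (\<forall>a\<in>N. \<exists>p::nat. w a = Max (w ` N) / 2 ^ p) \<and>
     (\<forall>a\<in>N. cost v a {1..m} = 1) \<and>
     (\<forall>a\<in>N. \<forall>e\<in>{1..m}. v a e = 0 \<or> (\<exists>p::nat. v a e = Max (w ` N) / 2 ^ p)) \<and>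
     (\<forall>a\<in>N. \<forall>e\<in>{1..m}. \<forall>e'\<in>{1..m}. e \<le> e' \<longrightarrow> v a e' \<le> v a e) \<and>
     (\<forall>a\<in>N. WMMS N m w v a = w a)"

text \<open>Group weights w_1 > ... > w_k, 0-indexed here: gw N w 0 is the largest weight.\<close>
definition gw :: "'a set \<Rightarrow> ('a \<Rightarrow> real) \<Rightarrow> nat \<Rightarrow> real" where
  "gw N w r = rev (sorted_list_of_set (w ` N)) ! r"

definition ngroups :: "'a set \<Rightarrow> ('a \<Rightarrow> real) \<Rightarrow> nat" where
  "ngroups N w = card (w ` N)"

definition gsize :: "'a set \<Rightarrow> ('a \<Rightarrow> real) \<Rightarrow> nat \<Rightarrow> nat" where
  "gsize N w r = card {a\<in>N. w a = gw N w r}"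

definition gW :: "'a set \<Rightarrow> ('a \<Rightarrow> real) \<Rightarrow> nat \<Rightarrow> real" where
  "gW N w r = real (gsize N w r) * gw N w r"

definition Lbound :: "'a set \<Rightarrow> ('a \<Rightarrow> real) \<Rightarrow> nat \<Rightarrow> real" where
  "Lbound N w r = (if r = 0 then 0 else (\<Sum>j<r. gW N w j) / gw N w r)"

end

theory Submission
  imports Defs
begin

text \<open>Fix an allocation witnessing \<open>WMMS = w a\<close>, so that every bundle costs agent \<open>a\<close> at most the
  weight of its owner. If \<open>v a e\<^sub>h > w\<^sub>r\<close>, then by monotonicity each of the items \<open>e\<^sub>1, \<dots>, e\<^sub>h\<close>
  costs more than \<open>w\<^sub>r\<close>, so each of them lies in the bundle of an agent of weight above \<open>w\<^sub>r\<close>,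
  i.e. of a group preceding \<open>G\<^sub>r\<close>. Hence \<open>h w\<^sub>r < \<Sum>\<^sub>j\<^sub><\<^sub>r W\<^sub>j\<close>, i.e. \<open>h < L\<^sub>r\<close>.\<close>

lemma gw_strict_antimono:
  assumes "finite N" and "i < j" and "j < ngroups N w"
  shows "gw N w j < gw N w i"
proof -
  have "sorted_wrt (>) (rev (sorted_list_of_set (w ` N)))"
    using strict_sorted_list_of_set[of "w ` N"] by (simp add: sorted_wrt_rev)
  then show ?thesis
    using assms by (simp add: gw_def ngroups_def sorted_wrt_iff_nth_less)
qed

lemma gw_enumerates_weights:
  assumes "finite N"
  shows "gw N w ` {..<ngroups N w} = w ` N"
proof -
  define ws where "ws = rev (sorted_list_of_set (w ` N))"
  have "length ws = ngroups N w"
    using assms by (simp add: ws_def ngroups_def)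
  then have "gw N w ` {..<ngroups N w} = nth ws ` {0..<length ws}"
    by (simp add: gw_def ws_def atLeast0LessThan)
  also have "\<dots> = set ws"
    by (simp add: nth_image)
  also have "\<dots> = w ` N"
    using assms by (simp add: ws_def)
  finally show ?thesis .
qed

lemma gw_less_iff:
  assumes "finite N" and "i < ngroups N w" and "j < ngroups N w"
  shows "gw N w j < gw N w i \<longleftrightarrow> i < j"
  using assms gw_strict_antimono[of N] by (metis less_asym not_less_iff_gr_or_eq)

lemma weights_above_gw:
  assumes "finite N" and r: "r < ngroups N w"
  shows "{x \<in> w ` N. gw N w r < x} = gw N w ` {..<r}"
proof -
  have "{x \<in> gw N w ` {..<ngroups N w}. gw N w r < x} = gw N w ` {..<r}"
    using r gw_less_iff[OF assms(1)] by (auto simp: image_iff)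
  then show ?thesis
    using gw_enumerates_weights[OF assms(1)] by simp
qed

lemma sum_gW_eq_weight_above:
  assumes "finite N" and r: "r < ngroups N w"
  shows "(\<Sum>j<r. gW N w j) = (\<Sum>b\<in>{b \<in> N. gw N w r < w b}. w b)"
    (is "_ = sum w ?B")
proof -
  have inj: "inj_on (gw N w) {..<r}"
    using r gw_less_iff[OF assms(1)] by (intro inj_onI) (metis lessThan_iff less_trans not_less_iff_gr_or_eq)
  have "w ` ?B = {x \<in> w ` N. gw N w r < x}"
    by auto
  then have image: "w ` ?B = gw N w ` {..<r}"
    using weights_above_gw[OF assms] by simp
  have "sum w ?B = (\<Sum>x\<in>w ` ?B. \<Sum>b\<in>{b \<in> ?B. w b = x}. w b)"
    using assms(1) by (rule sum.image_gen[OF finite_subset, rotated]) auto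
  also have "\<dots> = (\<Sum>x\<in>w ` ?B. real (card {b \<in> N. w b = x}) * x)"
    by (intro sum.cong refl) (auto intro!: arg_cong[where f = card])
  also have "\<dots> = (\<Sum>j<r. gW N w j)"
    unfolding image sum.reindex[OF inj] by (simp add: gW_def gsize_def)
  finally show ?thesis ..
qed

lemma WMMS_attained:
  assumes "finite N" and "N \<noteq> {}" and "w a > 0"
  obtains f where "f \<in> allocations N m"
    and "\<And>b. b \<in> N \<Longrightarrow> cost v a (bundle_of m f b) / w b \<le> WMMS N m w v a / w a"
proof -
  define F where "F = (\<lambda>f. Max ((\<lambda>b. cost v a (bundle_of m f b) / w b) ` N)) ` allocations N m"
  have "finite F"
    unfolding F_def allocations_def using assms(1) by (simp add: finite_PiE)
  moreover have "F \<noteq> {}"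
    unfolding F_def allocations_def using assms(2) by (simp add: PiE_eq_empty_iff)
  ultimately have "Min F \<in> F"
    by (rule Min_in)
  then obtain f where f: "f \<in> allocations N m"
    and f_Min: "Min F = Max ((\<lambda>b. cost v a (bundle_of m f b) / w b) ` N)"
    unfolding F_def by blast
  have WMMS: "WMMS N m w v a / w a = Min F"
    using assms(3) by (simp add: WMMS_def F_def)
  show ?thesis
  proof (rule that[OF f])
    fix b assume "b \<in> N"
    then have "cost v a (bundle_of m f b) / w b \<le> Max ((\<lambda>b. cost v a (bundle_of m f b) / w b) ` N)"
      using assms(1) by (intro Max_ge) auto
    then show "cost v a (bundle_of m f b) / w b \<le> WMMS N m w v a / w a"
      by (simp only: WMMS f_Min)
  qed
qed

lemma item_cost_le_bundle_cost:
  assumes "e \<in> {1..m}" and "\<And>e. e \<in> {1..m} \<Longrightarrow> v a e \<ge> 0"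
  shows "v a e \<le> cost v a (bundle_of m f (f e))"
  unfolding cost_def bundle_of_def using assms by (intro member_le_sum) auto

lemma sum_expensive_items_le_heavy_weight:
  assumes fin: "finite N" and f: "f \<in> allocations N m"
    and nonneg: "\<And>e. e \<in> {1..m} \<Longrightarrow> v a e \<ge> 0"
    and bounded: "\<And>b. b \<in> N \<Longrightarrow> cost v a (bundle_of m f b) \<le> w b"
    and E: "E \<subseteq> {1..m}" and expensive: "\<And>e. e \<in> E \<Longrightarrow> v a e > t"
  shows "(\<Sum>e\<in>E. v a e) \<le> (\<Sum>b\<in>{b \<in> N. t < w b}. w b)"
proof -
  let ?B = "{b \<in> N. t < w b}"
  have owner_heavy: "f e \<in> ?B" if e: "e \<in> E" for e
  proof -
    have "f e \<in> N" using f e E by (auto simp: allocations_def)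
    moreover have "t < w (f e)"
      using expensive[OF e] item_cost_le_bundle_cost[of e m v a f] nonneg bounded[OF \<open>f e \<in> N\<close>] e E
      by fastforce
    ultimately show ?thesis by simp
  qed
  have "(\<Sum>e\<in>E. v a e) = (\<Sum>b\<in>?B. \<Sum>e\<in>{e \<in> E. f e = b}. v a e)"
    using fin E owner_heavy by (intro sum.group[symmetric]) (auto intro: finite_subset)
  also have "\<dots> \<le> (\<Sum>b\<in>?B. cost v a (bundle_of m f b))"
    unfolding cost_def bundle_of_def using E nonneg by (intro sum_mono sum_mono2) auto
  also have "\<dots> \<le> sum w ?B"
    using bounded by (intro sum_mono) auto
  finally show ?thesis .
qed

lemma canonical_cost_nonneg:
  assumes "canonical N m w v" and "a \<in> N" and "e \<in> {1..m}"
  shows "v a e \<ge> 0"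
proof -
  have "finite N" "N \<noteq> {}" "\<forall>b\<in>N. w b > 0"
    using assms(1) by (auto simp: canonical_def)
  then have "Max (w ` N) > 0"
    using Max_in[of "w ` N"] by fastforce
  moreover have "v a e = 0 \<or> (\<exists>p::nat. v a e = Max (w ` N) / 2 ^ p)"
    using assms by (auto simp: canonical_def)
  ultimately show ?thesis
    by auto
qed

lemma canonical_bundles_within_weights:
  assumes "canonical N m w v" and "a \<in> N"
  obtains f where "f \<in> allocations N m"
    and "\<And>b. b \<in> N \<Longrightarrow> cost v a (bundle_of m f b) \<le> w b"
proof -
  have wpos: "\<And>b. b \<in> N \<Longrightarrow> w b > 0"
    using assms(1) by (auto simp: canonical_def)
  have "WMMS N m w v a / w a = 1"
    using assms wpos[OF assms(2)] by (auto simp: canonical_def)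
  then obtain f where f: "f \<in> allocations N m"
    and ratio: "\<And>b. b \<in> N \<Longrightarrow> cost v a (bundle_of m f b) / w b \<le> 1"
    using WMMS_attained[of N w a m v] assms wpos by (auto simp: canonical_def)
  show ?thesis
  proof (rule that[OF f])
    fix b assume "b \<in> N"
    then show "cost v a (bundle_of m f b) \<le> w b"
      using ratio[of b] wpos[of b] by (simp add: divide_le_eq_1)
  qed
qed

theorem mainTheorem7:
  fixes N :: "'a set" and m :: nat and w :: "'a \<Rightarrow> real" and v :: "'a \<Rightarrow> nat \<Rightarrow> real"
  assumes "canonical N m w v"
    and "a \<in> N"
    and "r < ngroups N w"
    and "h \<in> {1..m}"
    and "real h > Lbound N w r"
  shows "v a h \<le> gw N w r"
proof (rule ccontr)
  assume "\<not> v a h \<le> gw N w r"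
  then have expensive: "gw N w r < v a e" if "e \<in> {1..h}" for e
    using assms(1,2,4) that by (fastforce simp: canonical_def)
  have fin: "finite N" and wpos: "\<And>b. b \<in> N \<Longrightarrow> w b > 0"
    using assms(1) by (auto simp: canonical_def)
  have "gw N w r \<in> w ` N"
    using gw_enumerates_weights[OF fin] assms(3) by blast
  then have gw_pos: "gw N w r > 0"
    using wpos by auto
  obtain f where f: "f \<in> allocations N m"
    and bounded: "\<And>b. b \<in> N \<Longrightarrow> cost v a (bundle_of m f b) \<le> w b"
    using canonical_bundles_within_weights[OF assms(1,2)] by blast
  have "{1..h} \<subseteq> {1..m}"
    using assms(4) by auto
  have "real h * gw N w r = (\<Sum>e\<in>{1..h}. gw N w r)"
    by simp
  also have "\<dots> < (\<Sum>e\<in>{1..h}. v a e)"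
    using assms(4) expensive by (intro sum_strict_mono) auto
  also have "\<dots> \<le> (\<Sum>b\<in>{b \<in> N. gw N w r < w b}. w b)"
    by (rule sum_expensive_items_le_heavy_weight[OF fin f canonical_cost_nonneg[OF assms(1,2)]
          bounded \<open>{1..h} \<subseteq> {1..m}\<close> expensive])
  also have "\<dots> = (\<Sum>j<r. gW N w j)"
    by (rule sum_gW_eq_weight_above[OF fin assms(3), symmetric])
  also have "\<dots> \<le> real h * gw N w r"
    using assms(5) gw_pos by (cases "r = 0") (auto simp: Lbound_def field_simps)
  finally show False
    by simp
qed

end
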